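(* Let $(a_n)_{n\ge1}$ be a real sequence with $|a_n|\le1$, and let $N_1<N_2<\cdots$ be integers with $\lim_{j\to\infty}\frac1{N_j}\sum_{n=1}^{N_j}|a_n|=\theta>0$. Then there exist a subsequence $(N_{j_t})_{t\ge1}$ and a point $x\in X$ such that for all sufficiently large $t$, $$\frac1{N_{j_t}}\sum_{n=1}^{N_{j_t}}f(\hat T^nx)\,a(n)\ \ge\ \theta\,\tau(N_{j_t}).$$ In particular $\limsup_{N\to\infty}\frac{\frac1N\sum_{n=1}^Nf(\hat T^nx)a(n)}{\tau(N)}>0$.
   Context: Let $\tau:\mathbb N\to(0,\infty)$ be non-increasing with $\tau(n)\to0$. Fix integers $2\le q_1<q_2<\cdots$ such that for every $k\ge1$: (i) $q_{k+1}>q_k^4+3q_k$; (ii) $\tau(\lceil q_{k+1}/3\rceil)<\frac1{16q_k}$. For $k\ge1$ put $q^{(0)}_k=q_{2k}$, $q^{(1)}_k=q_{2k+1}$, $q^{(2)}_k=q^{(0)}_k-1$, $q^{(3)}_k=q^{(1)}_k-1$, and $L^{(i)}_k=\lfloor q^{(i)}_{k+1}/(3q^{(i)}_k)\rfloor$. Let $s^{(i)}_k\in\{-1,0,1\}^{\mathbb N}$ (indices $n\ge1$) be given by $s^{(i)}_k(n)=1$ if $n=jq^{(i)}_k$ with $1\le j\le L^{(i)}_k$, $s^{(i)}_k(n)=-1$ if $n=jq^{(i)}_k$ with $L^{(i)}_k<j\le2L^{(i)}_k$, and $s^{(i)}_k(n)=0$ otherwise. For $w\in\{-1,0,1\}^{\mathbb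 N}$ and $p\in\mathbb N_0$ let $\sigma^{-p}w$ be defined by $(\sigma^{-p}w)(n)=0$ for $1\le n\le p$ and $(\sigma^{-p}w)(n)=w(n-p)$ for $n>p$. For $l\le m$ write $w|_l^m=(w_l,\dots,w_m)$. Let $R^{(i)}_k=\{(\sigma^{-p}s^{(i)}_k)|_{q^{(i)}_k}^{q^{(i)}_{k+1}-1}:p=0,1,\dots,q^{(i)}_k\}$ and $P^{(i)}=\{y\in\{-1,0,1\}^{\mathbb N}: y(n)=0\text{ for }1\le n<q^{(i)}_1,\ y|_{q^{(i)}_k}^{q^{(i)}_{k+1}-1}\in R^{(i)}_k\text{ for all }k\ge1\}$. Let $Z=\{-1,0,1\}^{\mathbb N}\times\{-1,0,1\}^{\mathbb Z}$, where each factor carries the metric $d(u,v)=3^{-\min\{|m|:u_m\neq v_m\}}$ and $Z$ the maximum of the two. $\sigma$ is the left shift $(\sigma u)_m=u_{m+1}$ (invertible on $\{-1,0,1\}^{\mathbb Z}$). Define $T:Z\to Z$, $T(y,z)=(\sigma y,\sigma^{y_1}z)$, and $X_i=\overline{\bigcup_{n\ge0}T^n(P^{(i)}\times\{-1,0,1\}^{\mathbb Z})}$ for $i\in\{0,1,2,3\}$. Let $X=X_0\times X_1\times X_2\times X_3\times\{0,1,2,3\}$ with $\hat T(p^{(0)},p^{(1)},p^{(2)},p^{(3)},i)=(Tp^{(0)},Tp^{(1)},Tp^{(2)},Tp^{(3)},i)$, and $f\in\mathcal C(X)$, $f((y^{(0)},z^{(0)}),(y^{(1)},z^{(1)}),(y^{(2)},z^{(2)}),(y^{(3)},z^{(3)}),i)=z^{(i)}_0$.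 *)

theory Defs
  imports "HOL-Analysis.Analysis"
begin

text \<open>One-sided sequences y in {-1,0,1}^N are functions nat => int, indices n >= 1;
  the unused value y 0 is fixed to 0. Two-sided sequences z are functions int => int.
  Closures are taken in the product topology (Function_Topology), which coincides
  with the topology of the metric d on {-1,0,1}^N x {-1,0,1}^Z.\<close>

type_synonym pt = "(nat \<Rightarrow> int) \<times> (int \<Rightarrow> int)"

definition qi :: "(nat \<Rightarrow> nat) \<Rightarrow> nat \<Rightarrow> nat \<Rightarrow> nat" where
  "qi q i k = (if i = 0 then q (2*k) else if i = 1 then q (2*k+1)
               else if i = 2 then q (2*k) - 1 else q (2*k+1) - 1)"

definition Lk :: "(nat \<Rightarrow> nat) \<Rightarrow> nat \<Rightarrow> nat \<Rightarrow> nat" where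
  "Lk q i k = qi q i (k+1) div (3 * qi q i k)"

definition sk :: "(nat \<Rightarrow> nat) \<Rightarrow> nat \<Rightarrow> nat \<Rightarrow> nat \<Rightarrow> int" where
  "sk q i k n =
     (if n \<ge> 1 \<and> (\<exists>j. 1 \<le> j \<and> j \<le> Lk q i k \<and> n = j * qi q i k) then 1
      else if n \<ge> 1 \<and> (\<exists>j. Lk q i k < j \<and> j \<le> 2 * Lk q i k \<and> n = j * qi q i k) then -1
      else 0)"

definition shiftR :: "nat \<Rightarrow> (nat \<Rightarrow> int) \<Rightarrow> nat \<Rightarrow> int" where
  "shiftR p w = (\<lambda>n. if n \<le> p then 0 else w (n - p))"

definition win :: "(nat \<Rightarrow> int) \<Rightarrow> nat \<Rightarrow> nat \<Rightarrow> int list" where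
  "win w l m = map w [l..<Suc m]"

definition Rk :: "(nat \<Rightarrow> nat) \<Rightarrow> nat \<Rightarrow> nat \<Rightarrow> int list set" where
  "Rk q i k = {win (shiftR p (sk q i k)) (qi q i k) (qi q i (k+1) - 1) | p. p \<le> qi q i k}"

definition Pset :: "(nat \<Rightarrow> nat) \<Rightarrow> nat \<Rightarrow> (nat \<Rightarrow> int) set" where
  "Pset q i = {y. y 0 = 0 \<and> (\<forall>n\<ge>1. y n \<in> {-1,0,1}) \<and>
                 (\<forall>n. 1 \<le> n \<and> n < qi q i 1 \<longrightarrow> y n = 0) \<and>
                 (\<forall>k\<ge>1. win y (qi q i k) (qi q i (k+1) - 1) \<in> Rk q i k)}"

definition Zfull :: "(int \<Rightarrow> int) set" where
  "Zfull = {z. \<forall>m. z m \<in> {-1,0,1}}"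

definition shl :: "(nat \<Rightarrow> int) \<Rightarrow> nat \<Rightarrow> int" where
  "shl y = (\<lambda>n. if n = 0 then 0 else y (Suc n))"

definition Tmap :: "pt \<Rightarrow> pt" where
  "Tmap p = (shl (fst p), (\<lambda>m. snd p (m + fst p 1)))"

definition Xi :: "(nat \<Rightarrow> nat) \<Rightarrow> nat \<Rightarrow> pt set" where
  "Xi q i = closure (\<Union>n. (Tmap ^^ n) ` (Pset q i \<times> Zfull))"

type_synonym xpt = "pt \<times> pt \<times> pt \<times> pt \<times> nat"

definition Xhat :: "(nat \<Rightarrow> nat) \<Rightarrow> xpt set" where
  "Xhat q = Xi q 0 \<times> Xi q 1 \<times> Xi q 2 \<times> Xi q 3 \<times> {0,1,2,3}"

definition That :: "xpt \<Rightarrow> xpt" where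
  "That x = (case x of (p0,p1,p2,p3,i) \<Rightarrow> (Tmap p0, Tmap p1, Tmap p2, Tmap p3, i))"

definition fhat :: "xpt \<Rightarrow> real" where
  "fhat x = (case x of (p0,p1,p2,p3,i) \<Rightarrow>
     of_int (snd ([p0,p1,p2,p3] ! i) 0))"

definition avg :: "(nat \<Rightarrow> real) \<Rightarrow> xpt \<Rightarrow> nat \<Rightarrow> real" where
  "avg a x N = (1 / real N) * (\<Sum>n=1..N. fhat ((That ^^ n) x) * a n)"

end

theory Submission
  imports Defs
begin

text \<open>
  For large \<open>N\<close> let \<open>R = q\<^sub>r\<close> be the largest term with \<open>q\<^sub>r\<^sub>+\<^sub>1 \<le> 3N\<close>; then \<open>R\<^sup>4 < 3N\<close> and
  \<open>\<tau>(N) < 1/(16R)\<close>. Cutting \<open>[1, N]\<close> into blocks of length \<open>Q \<in> {R - 1, R}\<close> starting at a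
  well-chosen phase \<open>p < Q\<close>, the absolute block sums of \<open>a\<close> add up to roughly \<open>\<Sum>\<bar>a\<^sub>n\<bar>/(2Q)\<close>.
  As \<open>Q\<close> is a term of one of the sequences \<open>q\<^sup>(\<^sup>i\<^sup>)\<close>, some \<open>y \<in> P\<^sup>(\<^sup>i\<^sup>)\<close> has partial sums
  equal to \<open>v\<close> along the \<open>v\<close>-th block, so that the skew product reads \<open>z(v)\<close> there. Taking
  \<open>z(v)\<close> to be the sign of the \<open>v\<close>-th block sum makes the ergodic average at least
  \<open>\<theta>/(16R) > \<theta>\<tau>(N)\<close>. Along a sparse subsequence of \<open>N\<^sub>j\<close> using a single family \<open>i\<close>, the
  blocks of different scales lie in different windows of \<open>y\<close> and use disjoint positions of \<open>z\<close>,
  so a single point serves all of them.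
\<close>

lemma strict_mono_bracket_unique:
  fixes f :: "nat \<Rightarrow> nat"
  assumes "strict_mono f" and "f k \<le> n" "n < f (Suc k)" and "f k' \<le> n" "n < f (Suc k')"
  shows "k = k'"
  using assms by (metis Suc_leI le_less_trans linorder_neqE_nat not_le strict_mono_less_eq)

lemma sum_split_at:
  fixes f :: "nat \<Rightarrow> 'a::comm_monoid_add"
  assumes "c \<le> n"
  shows "(\<Sum>m=1..n. f m) = (\<Sum>m=1..c. f m) + (\<Sum>m=Suc c..n. f m)"
  using sum.ub_add_nat[of 1 c f "n - c"] assms by simp

lemma sum_lessThan_shift: "(\<Sum>v<k. f (c + Suc v)) = (\<Sum>v=Suc c..c + k. f v)"
  using sum.shift_bounds_cl_nat_ivl[of f 1 c k] by (simp add: sum.atLeast1_atMost_eq ac_simps)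

lemma sum_blocks:
  fixes f :: "nat \<Rightarrow> 'a::comm_monoid_add"
  shows "(\<Sum>s\<in>{b..<b + k * Q}. f s) = (\<Sum>v<k. \<Sum>r<Q. f (b + v * Q + r))"
proof (induction k)
  case (Suc k)
  have "(\<Sum>s\<in>{b..<b + Suc k * Q}. f s) = (\<Sum>s\<in>{b..<b + k * Q}. f s) + (\<Sum>s\<in>{b + k * Q..<b + k * Q + Q}. f s)"
    using sum.atLeastLessThan_concat[of b "b + k * Q" "b + k * Q + Q" f] by (simp add: algebra_simps)
  also have "(\<Sum>s\<in>{b + k * Q..<b + k * Q + Q}. f s) = (\<Sum>r<Q. f (b + k * Q + r))"
    using sum.shift_bounds_nat_ivl[of f 0 "b + k * Q" Q] by (simp add: atLeast0LessThan ac_simps)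
  finally show ?case using Suc by simp
qed simp

lemma sum_by_phase:
  fixes g :: "nat \<Rightarrow> 'a::comm_monoid_add"
  shows "(\<Sum>s\<in>{Q..<(W + 1) * Q}. g s) = (\<Sum>p<Q. \<Sum>v=1..W. g (p + v * Q))"
proof -
  have "(\<Sum>s\<in>{Q..<(W + 1) * Q}. g s) = (\<Sum>v<W. \<Sum>r<Q. g (Q + v * Q + r))"
    using sum_blocks[of g Q W Q] by (simp add: algebra_simps)
  also have "\<dots> = (\<Sum>p<Q. \<Sum>v<W. g (p + Suc v * Q))"
    by (subst sum.swap) (simp add: algebra_simps)
  finally show ?thesis by (simp add: sum.atLeast1_atMost_eq)
qed

lemma exists_ge_average:
  fixes g :: "nat \<Rightarrow> real"
  assumes "0 < Q" and "T \<le> (\<Sum>p<Q. g p)"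
  shows "\<exists>p<Q. T \<le> real Q * g p"
proof (rule ccontr)
  assume "\<not> ?thesis"
  hence "(\<Sum>p<Q. real Q * g p) < (\<Sum>p<Q. T)"
    using assms(1) by (intro sum_strict_mono) auto
  hence "real Q * (\<Sum>p<Q. g p) < real Q * T" by (simp add: sum_distrib_left)
  thus False using assms by (simp add: mult_le_cancel_left_pos)
qed

lemma less_div_mult_add: "0 < Q \<Longrightarrow> n < n div Q * Q + (Q::nat)"
  using div_mult_mod_eq[of n Q] mod_less_divisor[of Q n] by linarith

section \<open>Delayed patterns and their gluing\<close>

definition tent :: "nat \<Rightarrow> nat \<Rightarrow> int" where
  "tent L d = int (min d L) - int (min d (2*L) - min d L)"

definition pattern :: "nat \<Rightarrow> nat \<Rightarrow> nat \<Rightarrow> int" where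
  "pattern Q L n =
     (if 1 \<le> n \<and> Q dvd n \<and> n div Q \<le> L then 1
      else if 1 \<le> n \<and> Q dvd n \<and> L < n div Q \<and> n div Q \<le> 2*L then -1 else 0)"

lemma tent_vanishes: "2*L \<le> d \<Longrightarrow> tent L d = 0"
  unfolding tent_def by auto

lemma tent_rising: "d \<le> L \<Longrightarrow> tent L d = int d"
  unfolding tent_def by auto

lemma sk_eq_pattern: "0 < qi q i k \<Longrightarrow> sk q i k = pattern (qi q i k) (Lk q i k)"
  by (rule ext) (auto simp: sk_def pattern_def elim!: dvdE)

lemma sum_shiftR_pattern:
  assumes "0 < Q"
  shows "(\<Sum>m=1..n. shiftR p (pattern Q L) m) = tent L ((n - p) div Q)"
proof (induction n)
  case 0
  show ?case by (simp add: tent_def)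
next
  case (Suc n)
  have step: "tent L ((Suc n - p) div Q) = tent L ((n - p) div Q) + shiftR p (pattern Q L) (Suc n)"
  proof (cases "p \<le> n")
    case True
    hence eq: "Suc n - p = Suc (n - p)" by simp
    show ?thesis
    proof (cases "Q dvd Suc (n - p)")
      case True
      hence "Suc (n - p) div Q = Suc ((n - p) div Q)" using div_Suc[of "n - p" Q] by auto
      thus ?thesis using True \<open>p \<le> n\<close> eq by (auto simp: shiftR_def pattern_def tent_def)
    next
      case False
      hence "Suc (n - p) div Q = (n - p) div Q" using div_Suc[of "n - p" Q] by (auto simp: dvd_eq_mod_eq_0)
      thus ?thesis using False \<open>p \<le> n\<close> eq by (simp add: shiftR_def pattern_def)
    qed
  qed (simp add: shiftR_def)
  show ?case using Suc step by simp
qed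

definition in_block :: "(nat \<Rightarrow> nat) \<Rightarrow> nat \<Rightarrow> nat \<Rightarrow> nat \<Rightarrow> bool" where
  "in_block q i n k \<longleftrightarrow> 1 \<le> k \<and> qi q i k \<le> n \<and> n < qi q i (k+1)"

definition glued :: "(nat \<Rightarrow> nat) \<Rightarrow> nat \<Rightarrow> (nat \<Rightarrow> nat) \<Rightarrow> nat \<Rightarrow> int" where
  "glued q i ph n =
     (if \<exists>k. in_block q i n k
      then shiftR (ph (THE k. in_block q i n k)) (sk q i (THE k. in_block q i n k)) n else 0)"

lemma Lk_times_qi_le: "3 * (Lk q i k * qi q i k) \<le> qi q i (k+1)"
  unfolding Lk_def by (metis div_times_less_eq_dividend mult.assoc mult.commute)

section \<open>Block sums of the weights\<close>

definition block_sum :: "(nat \<Rightarrow> real) \<Rightarrow> nat \<Rightarrow> nat \<Rightarrow> real" where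
  "block_sum a Q s = (\<Sum>r<Q. a (s + r))"

definition sgn_int :: "real \<Rightarrow> int" where
  "sgn_int x = (if x > 0 then 1 else if x < 0 then -1 else 0)"

lemma sgn_int_mult_self: "real_of_int (sgn_int x) * x = \<bar>x\<bar>"
  by (simp add: sgn_int_def)

lemma sgn_int_range: "sgn_int x \<in> {-1, 0, 1}"
  by (simp add: sgn_int_def)

lemma abs_block_sum_le:
  assumes "\<And>n. 1 \<le> n \<Longrightarrow> \<bar>a n\<bar> \<le> 1" and "1 \<le> s"
  shows "\<bar>block_sum a Q s\<bar> \<le> real Q"
proof -
  have "\<bar>block_sum a Q s\<bar> \<le> (\<Sum>r<Q. \<bar>a (s + r)\<bar>)"
    unfolding block_sum_def by (rule sum_abs)
  also have "\<dots> \<le> (\<Sum>r<Q. 1)" using assms by (intro sum_mono) auto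
  finally show ?thesis by simp
qed

lemma block_sum_telescope: "1 \<le> R \<Longrightarrow> a s = block_sum a R s - block_sum a (R - 1) (Suc s)"
  by (cases R) (simp_all add: block_sum_def sum.lessThan_Suc_shift del: sum.lessThan_Suc)

lemma tail_mass_le:
  fixes a :: "nat \<Rightarrow> real"
  assumes a_bd: "\<And>n. 1 \<le> n \<Longrightarrow> \<bar>a n\<bar> \<le> 1" and R: "1 \<le> R" and n: "4 * R \<le> n"
  shows "(\<Sum>m=1..n. \<bar>a m\<bar>) - 4 * real R \<le> (\<Sum>s=R..n - 3*R. \<bar>a s\<bar>)"
proof -
  have sub: "{R..n - 3*R} \<subseteq> {1..n}" using R by auto
  have "(\<Sum>m\<in>{1..n} - {R..n - 3*R}. \<bar>a m\<bar>) \<le> (\<Sum>m\<in>{1..n} - {R..n - 3*R}. 1)"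
    using a_bd by (intro sum_mono) auto
  also have "\<dots> \<le> 4 * real R"
    using sub n by (simp add: card_Diff_subset)
  finally show ?thesis using sum.subset_diff[OF sub, of "\<lambda>m. \<bar>a m\<bar>"] by simp
qed

lemma last_full_block:
  fixes n Q R :: nat
  assumes "1 \<le> Q" "Q \<le> R" "4 * R \<le> n"
  shows "n - 3*R + 1 < (n div Q - 1) * Q"
proof -
  have "n < n div Q * Q + Q" using assms(1) by (simp add: less_div_mult_add)
  moreover have "Q \<le> n div Q * Q" using assms by (simp add: le_div_geq less_eq_div_iff_mult_less_eq)
  ultimately show ?thesis using assms by (simp add: diff_mult_distrib)
qed

text \<open>Since \<open>\<bar>a s\<bar> \<le> \<bar>block_sum a R s\<bar> + \<bar>block_sum a (R - 1) (Suc s)\<bar>\<close>, one of the two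
  block lengths carries half of the mass; this is why the families \<open>q\<^sub>k - 1\<close> are needed.\<close>

lemma mass_at_some_scale:
  fixes a :: "nat \<Rightarrow> real"
  assumes a_bd: "\<And>n. 1 \<le> n \<Longrightarrow> \<bar>a n\<bar> \<le> 1" and R: "3 \<le> R" and n: "4 * R \<le> n"
  shows "\<exists>Q. R - 1 \<le> Q \<and> Q \<le> R \<and>
    (\<Sum>m=1..n. \<bar>a m\<bar>) - 4 * real R \<le> 2 * (\<Sum>s\<in>{Q..<(n div Q - 1) * Q}. \<bar>block_sum a Q s\<bar>)"
proof -
  define X0 where "X0 = (\<Sum>s=R..n - 3*R. \<bar>block_sum a R s\<bar>)"
  define X1 where "X1 = (\<Sum>s=R..n - 3*R. \<bar>block_sum a (R - 1) (Suc s)\<bar>)"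
  have "(\<Sum>s=R..n - 3*R. \<bar>a s\<bar>) \<le> X0 + X1"
    unfolding X0_def X1_def sum.distrib[symmetric]
    using block_sum_telescope[of R a] R by (intro sum_mono) (metis abs_triangle_ineq4 le_trans one_le_numeral)
  hence mass: "(\<Sum>m=1..n. \<bar>a m\<bar>) - 4 * real R \<le> X0 + X1"
    using tail_mass_le[OF a_bd _ n] R by force
  show ?thesis
  proof (cases "X1 \<le> X0")
    case True
    have "{R..n - 3*R} \<subseteq> {R..<(n div R - 1) * R}"
      using last_full_block[of R R n] R n by auto
    hence "X0 \<le> (\<Sum>s\<in>{R..<(n div R - 1) * R}. \<bar>block_sum a R s\<bar>)"
      unfolding X0_def by (intro sum_mono2) auto
    thus ?thesis using mass True by (intro exI[of _ R]) auto
  next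
    case False
    have "Suc (n - 3*R) < (n div (R - 1) - 1) * (R - 1)"
      using last_full_block[of "R - 1" R n] R n by simp
    hence sub: "{Suc R..Suc (n - 3*R)} \<subseteq> {R - 1..<(n div (R - 1) - 1) * (R - 1)}"
      by auto
    have "X1 = (\<Sum>s=Suc R..Suc (n - 3*R). \<bar>block_sum a (R - 1) s\<bar>)"
      unfolding X1_def by (rule sum.shift_bounds_cl_Suc_ivl[symmetric])
    also have "\<dots> \<le> (\<Sum>s\<in>{R - 1..<(n div (R - 1) - 1) * (R - 1)}. \<bar>block_sum a (R - 1) s\<bar>)"
      by (rule sum_mono2[OF _ sub]) auto
    finally have "X1 \<le> \<dots>" .
    thus ?thesis using mass False by (intro exI[of _ "R - 1"]) auto
  qed
qed

definition good_blocking :: "(nat \<Rightarrow> real) \<Rightarrow> nat \<Rightarrow> nat \<Rightarrow> nat \<Rightarrow> nat \<Rightarrow> bool" where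
  "good_blocking a n R Q p \<longleftrightarrow> R - 1 \<le> Q \<and> Q \<le> R \<and> p < Q \<and>
     (\<Sum>m=1..n. \<bar>a m\<bar>) - 4 * real R \<le> 2 * real Q * (\<Sum>v=1..n div Q - 2. \<bar>block_sum a Q (p + v * Q)\<bar>)"

lemma good_blocking_exists:
  fixes a :: "nat \<Rightarrow> real"
  assumes a_bd: "\<And>n. 1 \<le> n \<Longrightarrow> \<bar>a n\<bar> \<le> 1" and R: "3 \<le> R" and n: "4 * R \<le> n"
  shows "\<exists>Q p. good_blocking a n R Q p"
proof -
  obtain Q where Q: "R - 1 \<le> Q" "Q \<le> R" and
    mass: "(\<Sum>m=1..n. \<bar>a m\<bar>) - 4 * real R \<le> 2 * (\<Sum>s\<in>{Q..<(n div Q - 1) * Q}. \<bar>block_sum a Q s\<bar>)"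
    using mass_at_some_scale[of a R n, OF a_bd R n] by blast
  have "4 \<le> n div Q" using Q R n by (simp add: less_eq_div_iff_mult_less_eq)
  hence "n div Q - 1 = n div Q - 2 + 1" by simp
  hence "((\<Sum>m=1..n. \<bar>a m\<bar>) - 4 * real R) / 2
      \<le> (\<Sum>p<Q. \<Sum>v=1..n div Q - 2. \<bar>block_sum a Q (p + v * Q)\<bar>)"
    using mass sum_by_phase[of "\<lambda>s. \<bar>block_sum a Q s\<bar>" Q "n div Q - 2"] by simp
  moreover have "0 < Q" using Q R by simp
  ultimately obtain p where "p < Q"
    "((\<Sum>m=1..n. \<bar>a m\<bar>) - 4 * real R) / 2 \<le> real Q * (\<Sum>v=1..n div Q - 2. \<bar>block_sum a Q (p + v * Q)\<bar>)"
    using exists_ge_average by blast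
  hence "good_blocking a n R Q p" using Q unfolding good_blocking_def by (simp add: mult.commute)
  thus ?thesis by blast
qed

lemma sum_signed_blocks:
  fixes a :: "nat \<Rightarrow> real" and z :: "int \<Rightarrow> int" and S :: "nat \<Rightarrow> int"
  assumes S: "\<And>v m. 1 \<le> v \<Longrightarrow> v \<le> W \<Longrightarrow> p + v * Q \<le> m \<Longrightarrow> m < p + v * Q + Q \<Longrightarrow> S m = int v"
    and z: "\<And>v. V < v \<Longrightarrow> v \<le> W \<Longrightarrow> z (int v) = sgn_int (block_sum a Q (p + v * Q))"
  shows "(\<Sum>m\<in>{p + Suc V * Q..<p + Suc V * Q + (W - V) * Q}. real_of_int (z (S m)) * a m)
           = (\<Sum>v=Suc V..W. \<bar>block_sum a Q (p + v * Q)\<bar>)"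
proof -
  let ?g = "\<lambda>m. real_of_int (z (S m)) * a m"
  have "(\<Sum>m\<in>{p + Suc V * Q..<p + Suc V * Q + (W - V) * Q}. ?g m)
      = (\<Sum>v<W - V. \<Sum>r<Q. ?g (p + Suc V * Q + v * Q + r))"
    by (rule sum_blocks)
  also have "\<dots> = (\<Sum>v<W - V. \<bar>block_sum a Q (p + (V + Suc v) * Q)\<bar>)"
  proof (intro sum.cong refl)
    fix v assume "v \<in> {..<W - V}"
    hence u: "V < V + Suc v" "V + Suc v \<le> W" by auto
    have "(\<Sum>r<Q. ?g (p + Suc V * Q + v * Q + r)) =
        (\<Sum>r<Q. real_of_int (sgn_int (block_sum a Q (p + (V + Suc v) * Q))) * a (p + (V + Suc v) * Q + r))"
      using S[of "V + Suc v"] z[OF u] u by (intro sum.cong refl) (auto simp: algebra_simps)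
    thus "(\<Sum>r<Q. ?g (p + Suc V * Q + v * Q + r)) = \<bar>block_sum a Q (p + (V + Suc v) * Q)\<bar>"
      by (simp add: block_sum_def sum_distrib_left[symmetric] sgn_int_mult_self)
  qed
  also have "\<dots> = (\<Sum>v=Suc V..W. \<bar>block_sum a Q (p + v * Q)\<bar>)"
    using sum_lessThan_shift[of "\<lambda>v. \<bar>block_sum a Q (p + v * Q)\<bar>" V "W - V"]
    by (cases "V \<le> W") auto
  finally show ?thesis .
qed

lemma signed_block_sum_ge:
  fixes a :: "nat \<Rightarrow> real" and z :: "int \<Rightarrow> int" and S :: "nat \<Rightarrow> int"
  assumes a_bd: "\<And>n. 1 \<le> n \<Longrightarrow> \<bar>a n\<bar> \<le> 1" and z_bd: "\<And>w. \<bar>z w\<bar> \<le> 1"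
    and Q: "1 \<le> Q" "p < Q" "2 * Q \<le> n"
    and S: "\<And>v m. 1 \<le> v \<Longrightarrow> v \<le> n div Q - 2 \<Longrightarrow> p + v * Q \<le> m \<Longrightarrow> m < p + v * Q + Q
              \<Longrightarrow> S m = int v"
    and z: "\<And>v. V < v \<Longrightarrow> v \<le> n div Q - 2 \<Longrightarrow> z (int v) = sgn_int (block_sum a Q (p + v * Q))"
  shows "(\<Sum>v=Suc V..n div Q - 2. \<bar>block_sum a Q (p + v * Q)\<bar>) - real ((V + 3) * Q)
           \<le> (\<Sum>m=1..n. real_of_int (z (S m)) * a m)"
proof -
  define W where "W = n div Q - 2"
  define g where "g m = real_of_int (z (S m)) * a m" for m
  define J where "J = {p + Suc V * Q..<p + Suc V * Q + (W - V) * Q}"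
  have g_bd: "\<bar>g m\<bar> \<le> 1" if "1 \<le> m" for m
  proof -
    have "\<bar>real_of_int (z (S m))\<bar> \<le> 1" using z_bd[of "S m"] by (metis of_int_abs of_int_le_1_iff)
    thus ?thesis using a_bd[OF that] unfolding g_def abs_mult by (simp add: mult_le_one)
  qed
  have n_div: "(W + 2) * Q \<le> n" "n < (W + 3) * Q"
    using Q less_div_mult_add[of Q n]
    by (simp_all add: W_def less_eq_div_iff_mult_less_eq algebra_simps)
  have J_sub: "J \<subseteq> {1..n}"
  proof
    fix m assume m: "m \<in> J"
    hence "V < W" unfolding J_def by (cases "V < W") auto
    hence "p + Suc V * Q + (W - V) * Q = p + (W + 1) * Q"
      by (simp add: add_mult_distrib[symmetric])
    thus "m \<in> {1..n}" using m Q n_div unfolding J_def by (auto simp: algebra_simps)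
  qed
  have "\<bar>\<Sum>m\<in>{1..n} - J. g m\<bar> \<le> (\<Sum>m\<in>{1..n} - J. 1)"
    using g_bd by (intro order.trans[OF sum_abs] sum_mono) auto
  also have "\<dots> = real (n - (W - V) * Q)"
    using J_sub by (simp add: card_Diff_subset J_def)
  also have "\<dots> \<le> real ((V + 3) * Q)"
  proof -
    have "(W + 3) * Q \<le> ((W - V) + (V + 3)) * Q" by (intro mult_le_mono1) linarith
    thus ?thesis using n_div(2) unfolding of_nat_le_iff add_mult_distrib by linarith
  qed
  moreover have "(\<Sum>m\<in>J. g m) = (\<Sum>v=Suc V..W. \<bar>block_sum a Q (p + v * Q)\<bar>)"
    unfolding J_def g_def using S z unfolding W_def by (rule sum_signed_blocks)
  ultimately show ?thesis
    using sum.subset_diff[OF J_sub finite_atLeastAtMost, of g] unfolding g_def W_def by linarith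
qed

lemma sum_abs_block_sums_le:
  assumes a_bd: "\<And>n. 1 \<le> n \<Longrightarrow> \<bar>a n\<bar> \<le> 1" and Q: "1 \<le> Q"
  shows "(\<Sum>v=1..W. \<bar>block_sum a Q (p + v * Q)\<bar>)
           \<le> real V * real Q + (\<Sum>v=Suc V..W. \<bar>block_sum a Q (p + v * Q)\<bar>)"
proof -
  let ?B = "\<lambda>v. \<bar>block_sum a Q (p + v * Q)\<bar>"
  have "(\<Sum>v=1..W. ?B v) \<le> (\<Sum>v\<in>{1..V} \<union> {Suc V..W}. ?B v)"
    by (intro sum_mono2) auto
  also have "\<dots> = (\<Sum>v=1..V. ?B v) + (\<Sum>v=Suc V..W. ?B v)"
    by (rule sum.union_disjoint) auto
  also have "(\<Sum>v=1..V. ?B v) \<le> (\<Sum>v=1..V. real Q)"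
  proof (intro sum_mono)
    fix v assume "v \<in> {1..V}"
    hence "1 \<le> p + v * Q" using Q by (simp add: Suc_le_eq)
    with a_bd show "?B v \<le> real Q" by (rule abs_block_sum_le)
  qed
  finally show ?thesis by simp
qed

lemma correlation_arith:
  fixes A Y T \<theta> n R Q V :: real
  assumes R: "3 \<le> R" and Q: "Q \<le> R" and V: "0 \<le> V"
    and mass: "\<theta> * n / 2 \<le> A" and n_large: "16 * (2 * V + 5) * R\<^sup>2 \<le> 3 * \<theta> * n"
    and blocks: "A - 4 * R \<le> 2 * Q * (V * Q + Y)" and nonneg: "0 \<le> V * Q + Y"
    and signed: "Y - (V + 3) * Q \<le> T"
  shows "\<theta> * n / (16 * R) \<le> T"
proof -
  have R_sq: "R * 1 \<le> R * R" using R by (intro mult_left_mono) auto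
  have "A - 4 * R \<le> 2 * R * (V * Q + Y)"
    using blocks mult_right_mono[OF Q nonneg] by linarith
  hence "(A - 4 * R) / (2 * R) \<le> V * Q + Y"
    using R by (simp add: pos_divide_le_eq mult.commute)
  moreover have "(2 * V + 3) * Q \<le> (2 * V + 3) * R" using Q V by (intro mult_left_mono) auto
  ultimately have "(A - 4 * R) / (2 * R) - (2 * V + 3) * R \<le> T"
    using signed by (simp add: algebra_simps)
  moreover have "\<theta> * n \<le> 8 * (A - 4 * R) - 16 * (2 * V + 3) * R\<^sup>2"
    using n_large mass R_sq unfolding power2_eq_square by (simp add: algebra_simps)
  hence "\<theta> * n / (16 * R) \<le> (A - 4 * R) / (2 * R) - (2 * V + 3) * R"
    using R by (simp add: field_simps power2_eq_square)
  ultimately show ?thesis by linarith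
qed

lemma mult_sq_le_of_pow4_less:
  fixes R M x :: real
  assumes "R ^ 4 < 3 * x" and "M\<^sup>2 \<le> x" and "0 \<le> M"
  shows "M * R\<^sup>2 \<le> 3 * x"
proof (cases "R\<^sup>2 \<le> M")
  case True
  hence "M * R\<^sup>2 \<le> M\<^sup>2" using assms(3) by (simp add: mult_left_mono power2_eq_square)
  thus ?thesis using assms(2) by (smt (verit) zero_le_power2)
next
  case False
  hence "M * R\<^sup>2 \<le> R\<^sup>2 * R\<^sup>2" by (intro mult_right_mono) auto
  thus ?thesis using assms(1) by (simp add: power4_eq_xxxx power2_eq_square)
qed

lemma correlation_lower_bound:
  fixes a :: "nat \<Rightarrow> real" and z :: "int \<Rightarrow> int" and S :: "nat \<Rightarrow> int"
  assumes a_bd: "\<And>n. 1 \<le> n \<Longrightarrow> \<bar>a n\<bar> \<le> 1" and z_bd: "\<And>w. \<bar>z w\<bar> \<le> 1"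
    and R: "3 \<le> R" "4 * R \<le> n"
    and mass: "\<theta> * real n / 2 \<le> (\<Sum>m=1..n. \<bar>a m\<bar>)"
    and n_large: "16 * (2 * real V + 5) * (real R)\<^sup>2 \<le> 3 * \<theta> * real n"
    and blocking: "good_blocking a n R Q p"
    and S: "\<And>v m. 1 \<le> v \<Longrightarrow> v \<le> n div Q - 2 \<Longrightarrow> p + v * Q \<le> m \<Longrightarrow> m < p + v * Q + Q
              \<Longrightarrow> S m = int v"
    and z: "\<And>v. V < v \<Longrightarrow> v \<le> n div Q - 2 \<Longrightarrow> z (int v) = sgn_int (block_sum a Q (p + v * Q))"
  shows "\<theta> * real n / (16 * real R) \<le> (\<Sum>m=1..n. real_of_int (z (S m)) * a m)"
proof -
  define Y where "Y = (\<Sum>v=Suc V..n div Q - 2. \<bar>block_sum a Q (p + v * Q)\<bar>)"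
  have Q: "2 \<le> Q" "Q \<le> R" "p < Q"
    and blocks: "(\<Sum>m=1..n. \<bar>a m\<bar>) - 4 * real R
                   \<le> 2 * real Q * (\<Sum>v=1..n div Q - 2. \<bar>block_sum a Q (p + v * Q)\<bar>)"
    using blocking R unfolding good_blocking_def by auto
  have head: "(\<Sum>v=1..n div Q - 2. \<bar>block_sum a Q (p + v * Q)\<bar>) \<le> real V * real Q + Y"
    unfolding Y_def using a_bd Q(1) by (intro sum_abs_block_sums_le) auto
  have "Y - real ((V + 3) * Q) \<le> (\<Sum>m=1..n. real_of_int (z (S m)) * a m)"
    unfolding Y_def using Q R by (intro signed_block_sum_ge[OF a_bd z_bd _ _ _ S z]) auto
  hence signed: "Y - (real V + 3) * real Q \<le> (\<Sum>m=1..n. real_of_int (z (S m)) * a m)"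
    by (simp add: algebra_simps)
  have blocks': "(\<Sum>m=1..n. \<bar>a m\<bar>) - 4 * real R \<le> 2 * real Q * (real V * real Q + Y)"
    using blocks mult_left_mono[OF head, of "2 * real Q"] by simp
  have "0 \<le> real V * real Q + Y"
    using head order.trans[OF sum_nonneg] by (metis abs_ge_zero)
  with R Q show ?thesis
    by (intro correlation_arith[OF _ _ _ mass n_large blocks' _ signed]) auto
qed

lemma Tmap_iter:
  assumes "y 0 = 0"
  shows "(Tmap ^^ m) (y, z) = (\<lambda>l. if l = 0 then 0 else y (l + m), \<lambda>l. z (l + (\<Sum>j=1..m. y j)))"
proof (induction m)
  case 0
  show ?case using assms by (auto simp: fun_eq_iff)
next
  case (Suc m)
  thus ?case by (auto simp: Tmap_def shl_def algebra_simps)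
qed

lemma That_iter:
  "(That ^^ m) (p0, p1, p2, p3, i) = ((Tmap ^^ m) p0, (Tmap ^^ m) p1, (Tmap ^^ m) p2, (Tmap ^^ m) p3, i)"
  by (induction m) (auto simp: That_def)

lemma subseq_with_growth:
  fixes N B :: "nat \<Rightarrow> nat"
  assumes N: "strict_mono N" and J: "infinite J"
  obtains js where "strict_mono js" "\<And>t. js t \<in> J" "B 0 \<le> N (js 0)"
    "\<And>t. B (N (js t)) \<le> N (js (Suc t))"
proof -
  define next_idx where "next_idx b j = (LEAST j'. j' \<in> J \<and> j < j' \<and> b \<le> N j')" for b j
  have next_idx: "next_idx b j \<in> J \<and> j < next_idx b j \<and> b \<le> N (next_idx b j)" for b j
  proof -
    obtain j' where "j' \<in> J" "max (Suc j) b \<le> j'"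
      using J unfolding infinite_nat_iff_unbounded_le by blast
    hence "j' \<in> J \<and> j < j' \<and> b \<le> N j'" using seq_suble[OF N, of j'] by auto
    thus ?thesis unfolding next_idx_def by (rule LeastI)
  qed
  define js where "js = rec_nat (next_idx (B 0) 0) (\<lambda>_ j. next_idx (B (N j)) j)"
  have js0: "js 0 = next_idx (B 0) 0" and jsS: "js (Suc t) = next_idx (B (N (js t))) (js t)" for t
    by (simp_all add: js_def)
  show ?thesis
  proof
    show "strict_mono js" unfolding strict_mono_Suc_iff using next_idx jsS by simp
    show "js t \<in> J" for t using next_idx js0 jsS by (cases t) auto
    show "B 0 \<le> N (js 0)" using next_idx js0 by simp
    show "B (N (js t)) \<le> N (js (Suc t))" for t using next_idx jsS by simp
  qed
qed

lemma exists_seq_on_disjoint_ranges: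
  fixes V W :: "nat \<Rightarrow> nat" and g :: "nat \<Rightarrow> nat \<Rightarrow> int"
  assumes V: "mono V" and W: "\<And>t. W t \<le> V (Suc t)" and g: "\<And>t v. g t v \<in> {-1, 0, 1}"
  shows "\<exists>z \<in> Zfull. \<forall>t v. V t < v \<longrightarrow> v \<le> W t \<longrightarrow> z (int v) = g t v"
proof -
  define rng where "rng v t \<longleftrightarrow> V t < v \<and> v \<le> W t" for v t
  have unique: "t = t'" if "rng v t" "rng v t'" for v t t'
  proof (rule ccontr)
    assume "t \<noteq> t'"
    then consider "Suc t \<le> t'" | "Suc t' \<le> t" by linarith
    thus False using that W monoD[OF V] unfolding rng_def by cases (meson le_trans not_le)+
  qed
  define z where "z w = (if \<exists>t. rng (nat w) t then g (THE t. rng (nat w) t) (nat w) else 0)" for w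
  have "z \<in> Zfull" using g by (auto simp: Zfull_def z_def)
  moreover have "z (int v) = g t v" if "rng v t" for t v
    using that unique unfolding z_def by (auto intro!: arg_cong[of _ _ "\<lambda>t. g t v"] the_equality)
  ultimately show ?thesis unfolding rng_def by blast
qed

lemma limsup_pos_along_subseq:
  fixes f :: "nat \<Rightarrow> real" and r :: "nat \<Rightarrow> nat"
  assumes r: "strict_mono r" and c: "0 < c" and f: "\<And>t. c \<le> f (r t)"
  shows "0 < limsup (\<lambda>M. ereal (f M))"
proof -
  have "ereal c \<le> limsup ((\<lambda>M. ereal (f M)) \<circ> r)"
    using f by (intro le_Limsup) (auto intro: always_eventually)
  also have "\<dots> \<le> limsup (\<lambda>M. ereal (f M))" by (rule limsup_subseq_mono[OF r])
  finally show ?thesis using c by (simp add: order_less_le_trans[of 0 "ereal c"])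
qed

locale lacunary =
  fixes q :: "nat \<Rightarrow> nat"
  assumes q_1_ge: "q 1 \<ge> 2"
    and q_succ_gt: "\<And>k. k \<ge> 1 \<Longrightarrow> q (k+1) > q k ^ 4 + 3 * q k"
begin

lemma strict_mono_q: "strict_mono (\<lambda>k. q (Suc k))"
proof -
  have "q (Suc k) < q (Suc (Suc k))" for k
    using q_succ_gt[of "Suc k"] by (simp add: power4_eq_xxxx)
  thus ?thesis unfolding strict_mono_Suc_iff by blast
qed

lemma q_less: "1 \<le> k \<Longrightarrow> k < k' \<Longrightarrow> q k < q k'"
  using strict_mono_q[THEN strict_monoD, of "k - 1" "k' - 1"] by simp

lemma q_le: "1 \<le> k \<Longrightarrow> k \<le> k' \<Longrightarrow> q k \<le> q k'"
  using q_less[of k k'] by (cases "k = k'") auto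

lemma q_ge: "1 \<le> k \<Longrightarrow> k + 1 \<le> q k"
proof (induction k)
  case (Suc k)
  thus ?case using q_1_ge q_less[of k "Suc k"] by (cases "k = 0") auto
qed simp

lemma q_pow4_less: "1 \<le> k \<Longrightarrow> q k ^ 4 < q (k+1)"
  using q_succ_gt by fastforce

lemma q_succ_ge9: "1 \<le> k \<Longrightarrow> 9 * q k \<le> q (k+1)"
proof -
  assume k: "1 \<le> k"
  have "2 * 2 * 2 \<le> q k * q k * q k" using q_ge[OF k] k by (intro mult_mono) auto
  hence "8 * q k \<le> q k ^ 4" by (simp add: power4_eq_xxxx)
  thus ?thesis using q_succ_gt[OF k] by simp
qed

lemma qi_ge2: "1 \<le> k \<Longrightarrow> i < 4 \<Longrightarrow> 2 \<le> qi q i k"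
  using q_ge[of "2*k"] q_ge[of "2*k+1"] by (auto simp: qi_def)

lemma qi_succ_ge9: "1 \<le> k \<Longrightarrow> i < 4 \<Longrightarrow> 9 * qi q i k \<le> qi q i (k+1)"
proof -
  assume k: "1 \<le> k" and i: "i < 4"
  have "9 * q (2*k) \<le> q (2*(k+1))"
    using q_succ_ge9[of "2*k"] q_le[of "2*k+1" "2*k+2"] k by simp
  moreover have "9 * q (2*k+1) \<le> q (2*(k+1)+1)"
    using q_succ_ge9[of "2*k+1"] q_le[of "Suc (Suc (2*k))" "Suc (Suc (Suc (2*k)))"] k by simp
  ultimately show ?thesis using i by (auto simp: qi_def)
qed

lemma strict_mono_qi: "i < 4 \<Longrightarrow> strict_mono (\<lambda>k. qi q i (Suc k))"
proof -
  assume i: "i < 4"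
  have "qi q i (Suc k) < qi q i (Suc (Suc k))" for k
    using qi_succ_ge9[of "Suc k" i] qi_ge2[of "Suc k" i] i by simp
  thus ?thesis unfolding strict_mono_Suc_iff by blast
qed

lemma qi_le: "1 \<le> k \<Longrightarrow> k \<le> k' \<Longrightarrow> i < 4 \<Longrightarrow> qi q i k \<le> qi q i k'"
  using strict_mono_less_eq[OF strict_mono_qi, of i "k - 1" "k' - 1"] by simp

lemma Lk_ge2: "1 \<le> k \<Longrightarrow> i < 4 \<Longrightarrow> 2 \<le> Lk q i k"
  using qi_succ_ge9[of k i] qi_ge2[of k i]
  by (auto simp: Lk_def less_eq_div_iff_mult_less_eq)

lemma in_block_unique: "i < 4 \<Longrightarrow> in_block q i n k \<Longrightarrow> in_block q i n k' \<Longrightarrow> k = k'"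
  using strict_mono_bracket_unique[OF strict_mono_qi, of i "k - 1" n "k' - 1"]
  by (auto simp: in_block_def)

lemma glued_in_block:
  "i < 4 \<Longrightarrow> in_block q i n k \<Longrightarrow> glued q i ph n = shiftR (ph k) (sk q i k) n"
  unfolding glued_def using in_block_unique
  by (metis (no_types, lifting) theI)

lemma glued_before: "i < 4 \<Longrightarrow> n < qi q i 1 \<Longrightarrow> glued q i ph n = 0"
  using qi_le[of 1 _ i] by (fastforce simp: glued_def in_block_def)

lemma glued_in_Pset:
  assumes i: "i < 4" and ph: "\<And>k. 1 \<le> k \<Longrightarrow> ph k \<le> qi q i k"
  shows "glued q i ph \<in> Pset q i"
proof -
  let ?y = "glued q i ph"
  have "?y n \<in> {-1,0,1}" for n
    by (auto simp: glued_def shiftR_def sk_def)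
  moreover have "win ?y (qi q i k) (qi q i (k+1) - 1) \<in> Rk q i k" if k: "1 \<le> k" for k
  proof -
    have "\<forall>m\<in>set [qi q i k..<Suc (qi q i (k+1) - 1)]. in_block q i m k"
      using k qi_succ_ge9[OF k i] qi_ge2[OF k i] by (auto simp: in_block_def)
    hence "win ?y (qi q i k) (qi q i (k+1) - 1)
        = win (shiftR (ph k) (sk q i k)) (qi q i k) (qi q i (k+1) - 1)"
      unfolding win_def using glued_in_block[OF i] by (intro map_cong) auto
    thus ?thesis unfolding Rk_def using ph[OF k] by blast
  qed
  ultimately show ?thesis
    using glued_before[OF i] qi_ge2[of 1 i] i by (auto simp: Pset_def)
qed

lemma sum_glued_in_block:
  assumes i: "i < 4" and ph: "ph k \<le> qi q i k" and b: "in_block q i n k"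
  shows "(\<Sum>m=1..n. glued q i ph m)
       = (\<Sum>m=1..qi q i k - 1. glued q i ph m) + tent (Lk q i k) ((n - ph k) div qi q i k)"
proof -
  let ?Q = "qi q i k" and ?s = "shiftR (ph k) (sk q i k)"
  have k: "1 \<le> k" and Q: "?Q \<le> n" using b by (auto simp: in_block_def)
  have Q2: "2 \<le> ?Q" using qi_ge2[OF k i] .
  have s: "?s = shiftR (ph k) (pattern ?Q (Lk q i k))" using sk_eq_pattern Q2 by simp
  have "(\<Sum>m=Suc (?Q - 1)..n. glued q i ph m) = (\<Sum>m=Suc (?Q - 1)..n. ?s m)"
    using b Q2 by (intro sum.cong refl glued_in_block[OF i]) (auto simp: in_block_def)
  also have "\<dots> = (\<Sum>m=1..n. ?s m) - (\<Sum>m=1..?Q - 1. ?s m)"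
    using sum_split_at[of "?Q - 1" n ?s] Q by simp
  also have "\<dots> = tent (Lk q i k) ((n - ph k) div ?Q)"
    using sum_shiftR_pattern[of ?Q "ph k" "Lk q i k"] Q2 ph unfolding s by (simp add: tent_def)
  finally show ?thesis using sum_split_at[of "?Q - 1" n "glued q i ph"] Q by simp
qed

lemma sum_glued_before_block:
  assumes i: "i < 4" and ph: "\<And>k. 1 \<le> k \<Longrightarrow> ph k \<le> qi q i k" and k: "1 \<le> k"
  shows "(\<Sum>m=1..qi q i k - 1. glued q i ph m) = 0"
  using k
proof (induction k rule: dec_induct)
  case base
  show ?case using glued_before[OF i] qi_ge2[of 1 i] i by (intro sum.neutral) auto
next
  case (step k)
  let ?Q = "qi q i k" and ?L = "Lk q i k" and ?n = "qi q i (k+1) - 1"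
  have Q2: "2 \<le> ?Q" and L2: "2 \<le> ?L" and big: "9 * ?Q \<le> qi q i (k+1)"
    using qi_ge2[OF step(1) i] Lk_ge2[OF step(1) i] qi_succ_ge9[OF step(1) i] by auto
  have "3 * (?L * ?Q) \<le> qi q i (k+1)"
    using Lk_times_qi_le .
  moreover have "2 * ?Q \<le> ?L * ?Q" using L2 by simp
  ultimately have "2 * ?L * ?Q \<le> ?n - ph k" using ph[OF step(1)] Q2 by linarith
  hence "2 * ?L \<le> (?n - ph k) div ?Q" using Q2 by (simp add: less_eq_div_iff_mult_less_eq)
  moreover have "in_block q i ?n k" using step(1) big Q2 by (auto simp: in_block_def)
  ultimately show ?case
    using sum_glued_in_block[of i ph k ?n] i ph[OF step(1)] step.IH tent_vanishes by simp
qed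

lemma sum_glued_eq_block_number:
  assumes i: "i < 4" and ph: "\<And>k. 1 \<le> k \<Longrightarrow> ph k \<le> qi q i k"
    and k: "1 \<le> k" and v: "1 \<le> v" "v \<le> Lk q i k"
    and n: "ph k + v * qi q i k \<le> n" "n < ph k + (v+1) * qi q i k"
  shows "(\<Sum>m=1..n. glued q i ph m) = int v"
proof -
  let ?Q = "qi q i k" and ?L = "Lk q i k"
  have "3 * (?L * ?Q) \<le> qi q i (k+1)"
    using Lk_times_qi_le .
  moreover have "v * ?Q \<le> ?L * ?Q" and "?Q \<le> v * ?Q"
    using v by simp_all
  moreover have "n < ?Q + ?Q + v * ?Q"
    using n(2) ph[OF k] by (simp add: algebra_simps)
  ultimately have "in_block q i n k"
    using k n(1) unfolding in_block_def by linarith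
  moreover have "(n - ph k) div ?Q = v"
    using n by (intro div_nat_eqI) (auto simp: algebra_simps)
  ultimately show ?thesis
    using i sum_glued_in_block[of i ph k n] ph[OF k] sum_glued_before_block[OF i ph k] tent_rising[OF v(2)]
    by simp
qed

definition level :: "nat \<Rightarrow> nat" where
  "level n = Max {r. q (r+1) \<le> 3*n}"

lemma level:
  assumes "q 3 \<le> 3*n"
  shows "2 \<le> level n" "q (level n + 1) \<le> 3*n" "3*n < q (level n + 2)"
proof -
  define A where "A = {r. q (r+1) \<le> 3*n}"
  have "r \<le> 3*n" if "r \<in> A" for r using q_ge[of "r+1"] that by (simp add: A_def)
  hence "A \<subseteq> {..3*n}" by auto
  hence fin: "finite A" by (rule finite_subset) simp
  have two: "2 \<in> A" using assms by (simp add: A_def numeral_3_eq_3)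
  show "2 \<le> level n" unfolding level_def A_def[symmetric] using Max_ge[OF fin two] .
  have "level n \<in> A" unfolding level_def A_def[symmetric] using fin two by (intro Max_in) auto
  moreover have "level n + 1 \<notin> A"
    using Max_ge[OF fin, of "level n + 1"] unfolding level_def A_def[symmetric] by fastforce
  ultimately show "q (level n + 1) \<le> 3*n" "3*n < q (level n + 2)" unfolding A_def by auto
qed

lemma level_scale:
  assumes n: "q 3 \<le> 3*n"
  shows "3 \<le> q (level n)" "real (q (level n)) ^ 4 < 3 * real n" "4 * q (level n) \<le> n"
proof -
  let ?R = "q (level n)"
  show R: "3 \<le> ?R" using q_ge[of "level n"] level(1)[OF n] by simp
  have R4: "?R ^ 4 < 3 * n" using q_pow4_less[of "level n"] level[OF n] by simp
  hence "real (?R ^ 4) < real (3 * n)" by (simp only: of_nat_less_iff)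
  thus "real ?R ^ 4 < 3 * real n" by simp
  have "3 * 3 * 3 \<le> ?R * ?R * ?R" using R by (intro mult_le_mono) auto
  hence "27 * ?R \<le> ?R ^ 4" by (simp add: power4_eq_xxxx)
  thus "4 * ?R \<le> n" using R4 by linarith
qed

lemma level_parity_separated:
  assumes n: "q 3 \<le> 3*n" and n': "q 3 \<le> 3*n'" and sep: "q (level n + 2) \<le> n'"
    and parity: "level n mod 2 = level n' mod 2"
  shows "level n div 2 < level n' div 2"
proof -
  have "q (level n + 2) < q (level n' + 2)" using sep level(3)[OF n'] by linarith
  have "level n < level n'"
  proof (rule ccontr)
    assume "\<not> level n < level n'"
    hence "q (level n' + 2) \<le> q (level n + 2)" by (intro q_le) auto
    thus False using \<open>q (level n + 2) < q (level n' + 2)\<close> by simp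
  qed
  thus ?thesis using parity by presburger
qed

lemma Pset_subset_Xi: "Pset q i \<times> Zfull \<subseteq> Xi q i"
proof -
  have "Pset q i \<times> Zfull = (Tmap ^^ 0) ` (Pset q i \<times> Zfull)" by simp
  also have "\<dots> \<subseteq> (\<Union>n. (Tmap ^^ n) ` (Pset q i \<times> Zfull))" by blast
  finally show ?thesis unfolding Xi_def using closure_subset by blast
qed

text \<open>The coordinates other than the \<open>i\<close>-th one are irrelevant for \<open>fhat\<close>; any point of
  \<open>P\<^sup>(\<^sup>j\<^sup>) \<times> {-1,0,1}\<^sup>\<int>\<close> fills them.\<close>

definition embed_component :: "nat \<Rightarrow> pt \<Rightarrow> nat \<Rightarrow> pt" where
  "embed_component i u j = (if j = i then u else (glued q j (\<lambda>_. 0), \<lambda>_. 0))"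

definition embed_point :: "nat \<Rightarrow> pt \<Rightarrow> xpt" where
  "embed_point i u = (embed_component i u 0, embed_component i u 1, embed_component i u 2,
     embed_component i u 3, i)"

lemma embed_point_in_Xhat:
  assumes i: "i < 4" and u: "u \<in> Pset q i \<times> Zfull"
  shows "embed_point i u \<in> Xhat q"
proof -
  have "embed_component i u j \<in> Pset q j \<times> Zfull" if "j < 4" for j
    using u glued_in_Pset[OF that, of "\<lambda>_. 0"] by (auto simp: Zfull_def embed_component_def)
  hence comp: "embed_component i u j \<in> Xi q j" if "j < 4" for j
    using Pset_subset_Xi that by blast
  show ?thesis
    using comp[of 0] comp[of 1] comp[of 2] comp[of 3] i unfolding embed_point_def Xhat_def by (simp; presburger)
qed

lemma fhat_embed_point_iter:
  assumes i: "i < 4" and y0: "y 0 = 0"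
  shows "fhat ((That ^^ m) (embed_point i (y, z))) = real_of_int (z (\<Sum>j=1..m. y j))"
proof -
  let ?c = "\<lambda>j. (Tmap ^^ m) (embed_component i (y, z) j)"
  have "i \<in> {0, 1, 2, 3}" using i by auto
  hence "[?c 0, ?c 1, ?c 2, ?c 3] ! i = (Tmap ^^ m) (y, z)"
    by (auto simp: embed_component_def)
  moreover have "fhat ((That ^^ m) (embed_point i (y, z)))
      = real_of_int (snd ([?c 0, ?c 1, ?c 2, ?c 3] ! i) 0)"
    unfolding embed_point_def That_iter fhat_def by (simp only: prod.case)
  ultimately show ?thesis using Tmap_iter[of y m z, OF y0] by simp
qed

end

section \<open>The construction along a subsequence\<close>

locale setting = lacunary q for q :: "nat \<Rightarrow> nat" +
  fixes \<tau> :: "nat \<Rightarrow> real" and a :: "nat \<Rightarrow> real" and N :: "nat \<Rightarrow> nat" and \<theta> :: real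
  assumes tau_noninc: "\<And>m n. m \<le> n \<Longrightarrow> \<tau> n \<le> \<tau> m"
    and tau_q: "\<And>k. k \<ge> 1 \<Longrightarrow> \<tau> (nat \<lceil>real (q (k+1)) / 3\<rceil>) < 1 / (16 * real (q k))"
    and a_bd: "\<And>n. n \<ge> 1 \<Longrightarrow> \<bar>a n\<bar> \<le> 1"
    and N_mono: "strict_mono N"
    and N_lim: "(\<lambda>j. (1 / real (N j)) * (\<Sum>n=1..N j. \<bar>a n\<bar>)) \<longlonglongrightarrow> \<theta>"
    and theta_pos: "\<theta> > 0"
begin

lemma tau_at_level:
  assumes n: "q 3 \<le> 3*n"
  shows "\<tau> n < 1 / (16 * real (q (level n)))"
proof -
  have "real (q (level n + 1)) / 3 \<le> real n" using level(2)[OF n] by simp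
  hence "nat \<lceil>real (q (level n + 1)) / 3\<rceil> \<le> n" by (simp add: nat_le_iff ceiling_le_iff)
  hence "\<tau> n \<le> \<tau> (nat \<lceil>real (q (level n + 1)) / 3\<rceil>)" by (rule tau_noninc)
  also have "\<dots> < 1 / (16 * real (q (level n)))" using tau_q level(1)[OF n] by simp
  finally show ?thesis .
qed

definition blocking :: "nat \<Rightarrow> nat \<times> nat" where
  "blocking n = (SOME (Q, p). good_blocking a n (q (level n)) Q p)"

definition scale :: "nat \<Rightarrow> nat" where "scale n = fst (blocking n)"
definition phase :: "nat \<Rightarrow> nat" where "phase n = snd (blocking n)"

text \<open>The pattern family \<open>i\<close> and the index \<open>k\<close> with \<open>q\<^sup>(\<^sup>i\<^sup>)\<^sub>k = scale n\<close>: the parity of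
  \<open>level n\<close> picks \<open>q\<^sub>2\<^sub>k\<close> or \<open>q\<^sub>2\<^sub>k\<^sub>+\<^sub>1\<close>, and \<open>scale n = q (level n) - 1\<close> selects the shifted families.\<close>

definition family :: "nat \<Rightarrow> nat" where
  "family n = level n mod 2 + 2 * (q (level n) - scale n)"

definition block_index :: "nat \<Rightarrow> nat" where
  "block_index n = level n div 2"

lemma good_blocking_scale_phase:
  assumes "q 3 \<le> 3*n"
  shows "good_blocking a n (q (level n)) (scale n) (phase n)"
proof -
  let ?P = "\<lambda>(Q, p). good_blocking a n (q (level n)) Q p"
  have "\<exists>Q p. good_blocking a n (q (level n)) Q p"
    by (rule good_blocking_exists[OF _ level_scale(1)[OF assms] level_scale(3)[OF assms]])
      (simp add: a_bd)
  then obtain Q p where "?P (Q, p)" by auto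
  hence "?P (blocking n)" unfolding blocking_def by (rule someI)
  thus ?thesis unfolding scale_def phase_def by (simp add: case_prod_beta)
qed

lemma family_block_index:
  assumes n: "q 3 \<le> 3*n"
  shows "family n < 4" "1 \<le> block_index n" "qi q (family n) (block_index n) = scale n"
    "n div scale n \<le> Lk q (family n) (block_index n)"
proof -
  define b where "b = q (level n) - scale n"
  have b: "b = 0 \<or> b = 1" and sc: "scale n = q (level n) - b"
    using good_blocking_scale_phase[OF n] level_scale(1)[OF n] by (auto simp: good_blocking_def b_def)
  have lv: "2 * block_index n + level n mod 2 = level n" by (simp add: block_index_def)
  show "family n < 4" using b by (auto simp: family_def b_def[symmetric])
  show "1 \<le> block_index n" using level(1)[OF n] by (simp add: block_index_def)
  have qi_k: "qi q (family n) k = q (2 * k + level n mod 2) - b" for k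
    using b by (auto simp: qi_def family_def b_def[symmetric])
  show "qi q (family n) (block_index n) = scale n" using qi_k sc lv by simp
  have "3 * n \<le> qi q (family n) (block_index n + 1)"
    using qi_k level(3)[OF n] lv b by (auto simp: algebra_simps)
  hence "n div scale n \<le> qi q (family n) (block_index n + 1) div 3 div scale n"
    by (intro div_le_mono) simp
  thus "n div scale n \<le> Lk q (family n) (block_index n)"
    using qi_k sc lv by (simp add: Lk_def div_mult2_eq)
qed

lemma family_mod_2: "family n mod 2 = level n mod 2"
  by (simp add: family_def)

definition size_bound :: "nat \<Rightarrow> real" where
  "size_bound V = (16 * (2 * real V + 5) / \<theta>)\<^sup>2"

lemma avg_bound_at_level:
  fixes z :: "int \<Rightarrow> int" and S :: "nat \<Rightarrow> int"
  assumes n: "q 3 \<le> 3*n" and mass: "\<theta> * real n / 2 \<le> (\<Sum>m=1..n. \<bar>a m\<bar>)"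
    and large: "size_bound V \<le> real n"
    and z_bd: "\<And>w. \<bar>z w\<bar> \<le> 1"
    and S: "\<And>v m. 1 \<le> v \<Longrightarrow> v \<le> n div scale n - 2 \<Longrightarrow> phase n + v * scale n \<le> m
              \<Longrightarrow> m < phase n + v * scale n + scale n \<Longrightarrow> S m = int v"
    and z: "\<And>v. V < v \<Longrightarrow> v \<le> n div scale n - 2
              \<Longrightarrow> z (int v) = sgn_int (block_sum a (scale n) (phase n + v * scale n))"
  shows "\<theta> * \<tau> n < (1 / real n) * (\<Sum>m=1..n. real_of_int (z (S m)) * a m)"
proof -
  let ?R = "q (level n)"
  have "(16 * (2 * real V + 5) / \<theta>) * (real ?R)\<^sup>2 \<le> 3 * real n"
    using mult_sq_le_of_pow4_less[OF level_scale(2)[OF n] large[unfolded size_bound_def]] theta_pos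
    by simp
  hence n_large: "16 * (2 * real V + 5) * (real ?R)\<^sup>2 \<le> 3 * \<theta> * real n"
    using theta_pos by (simp add: field_simps)
  have "\<theta> * real n / (16 * real ?R) \<le> (\<Sum>m=1..n. real_of_int (z (S m)) * a m)"
    using a_bd z_bd level_scale(1,3)[OF n] mass n_large good_blocking_scale_phase[OF n] S z
    by (rule correlation_lower_bound)
  moreover have "0 < n" and "0 < ?R" using level_scale[OF n] by auto
  ultimately have "\<theta> / (16 * real ?R) \<le> (1 / real n) * (\<Sum>m=1..n. real_of_int (z (S m)) * a m)"
    by (simp add: field_simps)
  moreover have "\<theta> * \<tau> n < \<theta> / (16 * real ?R)"
    using mult_strict_left_mono[OF tau_at_level[OF n] theta_pos] by simp
  ultimately show ?thesis by linarith
qed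

lemma exists_block_counter:
  fixes NN :: "nat \<Rightarrow> nat"
  assumes c: "c < 4" and good: "\<And>t. q 3 \<le> 3 * NN t" and fam: "\<And>t. family (NN t) = c"
    and sep: "\<And>t. q (level (NN t) + 2) \<le> NN (Suc t)"
  obtains y where "y \<in> Pset q c"
    "\<And>t v m. 1 \<le> v \<Longrightarrow> v \<le> NN t div scale (NN t) - 2 \<Longrightarrow> phase (NN t) + v * scale (NN t) \<le> m
       \<Longrightarrow> m < phase (NN t) + v * scale (NN t) + scale (NN t) \<Longrightarrow> (\<Sum>j=1..m. y j) = int v"
proof -
  define kk where "kk t = block_index (NN t)" for t
  have "strict_mono kk"
    unfolding strict_mono_Suc_iff kk_def block_index_def
    using level_parity_separated[OF good good sep] fam family_mod_2 by metis
  hence kk_inj: "inj kk" by (rule strict_mono_imp_inj_on)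
  define ph where "ph k = (if k \<in> range kk then phase (NN (inv kk k)) else 0)" for k
  have ph_kk: "ph (kk t) = phase (NN t)" for t by (simp add: ph_def kk_inj)
  have qi_kk: "qi q c (kk t) = scale (NN t)" for t
    using family_block_index(3)[OF good] fam by (simp add: kk_def)
  have ph_le: "ph k \<le> qi q c k" if "1 \<le> k" for k
  proof (cases "k \<in> range kk")
    case True
    then obtain t where "k = kk t" by blast
    thus ?thesis using ph_kk qi_kk good_blocking_scale_phase[OF good]
      by (simp add: good_blocking_def less_imp_le)
  qed (simp add: ph_def)
  show thesis
  proof (rule that[of "glued q c ph"])
    show "glued q c ph \<in> Pset q c" by (rule glued_in_Pset[OF c ph_le])
    fix t v m
    assume v: "1 \<le> v" "v \<le> NN t div scale (NN t) - 2"
      and m: "phase (NN t) + v * scale (NN t) \<le> m" "m < phase (NN t) + v * scale (NN t) + scale (NN t)"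
    have "NN t div scale (NN t) \<le> Lk q c (kk t)"
      using family_block_index(4)[OF good[of t]] fam[of t] by (simp add: kk_def)
    hence "v \<le> Lk q c (kk t)" using v(2) by linarith
    moreover have "1 \<le> kk t" using family_block_index(2)[OF good[of t]] by (simp add: kk_def)
    ultimately show "(\<Sum>j=1..m. glued q c ph j) = int v"
      using sum_glued_eq_block_number[OF c ph_le _ v(1), of "kk t" m] m
      by (simp add: ph_kk qi_kk algebra_simps)
  qed
qed

text \<open>At the \<open>t\<close>-th scale the second coordinate is read at the block numbers \<open>v\<close>, and it is set to
  the sign of the \<open>v\<close>-th block sum for \<open>V t < v \<le> W t\<close>. These ranges are disjoint since \<open>W t\<close> is below
  the next scale; the first \<open>V t\<close> blocks may have the wrong sign, which \<open>size_bound\<close> pays for.\<close>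

lemma exists_point_along:
  fixes NN :: "nat \<Rightarrow> nat"
  assumes c: "c < 4" and NN: "strict_mono NN"
    and good: "\<And>t. q 3 \<le> 3 * NN t" "\<And>t. \<theta> * real (NN t) / 2 \<le> (\<Sum>m=1..NN t. \<bar>a m\<bar>)"
    and fam: "\<And>t. family (NN t) = c"
    and sep: "\<And>t. q (level (NN t) + 2) \<le> NN (Suc t)"
    and large0: "size_bound 0 \<le> real (NN 0)"
    and large: "\<And>t. size_bound (NN t) \<le> real (NN (Suc t))"
  shows "\<exists>x \<in> Xhat q. \<forall>t. \<theta> * \<tau> (NN t) < avg a x (NN t)"
proof -
  define V where "V t = (case t of 0 \<Rightarrow> 0 | Suc s \<Rightarrow> NN s)" for t
  define W where "W t = NN t div scale (NN t) - 2" for t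
  define sgn_block where
    "sgn_block t v = sgn_int (block_sum a (scale (NN t)) (phase (NN t) + v * scale (NN t)))" for t v
  have "mono V"
    unfolding mono_iff_le_Suc V_def using strict_mono_less_eq[OF NN] by (simp split: nat.split)
  moreover have "W t \<le> V (Suc t)" for t
    unfolding W_def V_def by (simp add: le_trans[OF diff_le_self div_le_dividend])
  ultimately obtain z where z: "z \<in> Zfull" "\<And>t v. V t < v \<Longrightarrow> v \<le> W t \<Longrightarrow> z (int v) = sgn_block t v"
    using exists_seq_on_disjoint_ranges[of V W sgn_block] sgn_int_range unfolding sgn_block_def
    by blast
  have z_bd: "\<bar>z w\<bar> \<le> 1" for w
  proof -
    have "z w \<in> {-1, 0, 1}" using z(1) by (simp add: Zfull_def)
    thus ?thesis by auto
  qed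
  obtain y where y: "y \<in> Pset q c"
    and y_sum: "\<And>t v m. 1 \<le> v \<Longrightarrow> v \<le> NN t div scale (NN t) - 2 \<Longrightarrow> phase (NN t) + v * scale (NN t) \<le> m
       \<Longrightarrow> m < phase (NN t) + v * scale (NN t) + scale (NN t) \<Longrightarrow> (\<Sum>j=1..m. y j) = int v"
    using exists_block_counter[of c NN, OF c good(1) fam sep] by blast
  have "y 0 = 0" using y by (simp add: Pset_def)
  have "\<theta> * \<tau> (NN t) < avg a (embed_point c (y, z)) (NN t)" for t
  proof -
    have "size_bound (V t) \<le> real (NN t)" using large0 large by (cases t) (simp_all add: V_def)
    hence "\<theta> * \<tau> (NN t) < (1 / real (NN t)) * (\<Sum>m=1..NN t. real_of_int (z (\<Sum>j=1..m. y j)) * a m)"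
      using z(2)[of t] z_bd y_sum[of _ t]
      by (intro avg_bound_at_level[OF good(1,2)]) (auto simp: W_def sgn_block_def)
    thus ?thesis using \<open>y 0 = 0\<close> by (simp add: avg_def fhat_embed_point_iter[OF c])
  qed
  moreover have "embed_point c (y, z) \<in> Xhat q" using embed_point_in_Xhat[OF c] y z(1) by blast
  ultimately show ?thesis by blast
qed

lemma eventually_good:
  "\<exists>j0. \<forall>j\<ge>j0. q 3 \<le> 3 * N j \<and> \<theta> * real (N j) / 2 \<le> (\<Sum>n=1..N j. \<bar>a n\<bar>)"
proof -
  obtain j1 where j1: "\<And>j. j1 \<le> j \<Longrightarrow> \<theta> / 2 < (1 / real (N j)) * (\<Sum>n=1..N j. \<bar>a n\<bar>)"
    using order_tendstoD(1)[OF N_lim, of "\<theta> / 2"] theta_pos unfolding eventually_sequentially by auto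
  have "q 3 \<le> 3 * N j \<and> \<theta> * real (N j) / 2 \<le> (\<Sum>n=1..N j. \<bar>a n\<bar>)" if j: "max j1 (q 3) \<le> j" for j
  proof
    have Nj: "j \<le> N j" using seq_suble[OF N_mono] .
    thus "q 3 \<le> 3 * N j" using j by simp
    have "0 < real (N j)" using Nj j q_ge[of 3] by simp
    thus "\<theta> * real (N j) / 2 \<le> (\<Sum>n=1..N j. \<bar>a n\<bar>)"
      using j1[of j] j by (simp add: field_simps)
  qed
  thus ?thesis by blast
qed

lemma exists_good_point:
  obtains js :: "nat \<Rightarrow> nat" and x
  where "strict_mono js" "x \<in> Xhat q" "\<And>t. \<theta> * \<tau> (N (js t)) < avg a x (N (js t))"
proof -
  obtain j0 where good: "\<And>j. j0 \<le> j \<Longrightarrow> q 3 \<le> 3 * N j \<and> \<theta> * real (N j) / 2 \<le> (\<Sum>n=1..N j. \<bar>a n\<bar>)"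
    using eventually_good by blast
  have "(family \<circ> N) ` {j0..} \<subseteq> {..<4}" using good family_block_index(1) by auto
  hence "finite ((family \<circ> N) ` {j0..})" by (rule finite_subset) simp
  then obtain c where "c \<in> (family \<circ> N) ` {j0..}" and inf: "infinite ((family \<circ> N) -` {c} \<inter> {j0..})"
    by (rule inf_img_fin_domE') (simp add: infinite_Ici)
  hence c: "c < 4" using good family_block_index(1) by auto
  define B where "B m = max (nat \<lceil>size_bound m\<rceil>) (q (level m + 2))" for m
  obtain js where js: "strict_mono js" "\<And>t. js t \<in> (family \<circ> N) -` {c} \<inter> {j0..}"
    "B 0 \<le> N (js 0)" "\<And>t. B (N (js t)) \<le> N (js (Suc t))"
    using subseq_with_growth[OF N_mono inf] by blast
  have "\<exists>x \<in> Xhat q. \<forall>t. \<theta> * \<tau> ((N \<circ> js) t) < avg a x ((N \<circ> js) t)"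
  proof (rule exists_point_along[OF c strict_mono_o[OF N_mono js(1)]])
    show "q 3 \<le> 3 * (N \<circ> js) t" "\<theta> * real ((N \<circ> js) t) / 2 \<le> (\<Sum>m=1..(N \<circ> js) t. \<bar>a m\<bar>)"
      "family ((N \<circ> js) t) = c" for t
      using good js(2)[of t] by auto
    show "q (level ((N \<circ> js) t) + 2) \<le> (N \<circ> js) (Suc t)"
      "size_bound ((N \<circ> js) t) \<le> real ((N \<circ> js) (Suc t))" for t
      using js(4)[of t] real_nat_ceiling_ge[of "size_bound (N (js t))"] by (auto simp: B_def)
    show "size_bound 0 \<le> real ((N \<circ> js) 0)"
      using js(3) real_nat_ceiling_ge[of "size_bound 0"] by (auto simp: B_def)
  qed
  then obtain x where "x \<in> Xhat q" "\<And>t. \<theta> * \<tau> (N (js t)) < avg a x (N (js t))" by auto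
  with js(1) show thesis by (rule that)
qed

end

theorem mainTheorem10:
  fixes \<tau> :: "nat \<Rightarrow> real" and q :: "nat \<Rightarrow> nat"
    and a :: "nat \<Rightarrow> real" and N :: "nat \<Rightarrow> nat" and \<theta> :: real
  assumes tau_pos: "\<And>n. \<tau> n > 0"
    and tau_noninc: "\<And>m n. m \<le> n \<Longrightarrow> \<tau> n \<le> \<tau> m"
    and tau_lim: "\<tau> \<longlonglongrightarrow> 0"
    and q_ge2: "q 1 \<ge> 2"
    and q_mono: "\<And>k. k \<ge> 1 \<Longrightarrow> q k < q (k+1)"
    and q_i: "\<And>k. k \<ge> 1 \<Longrightarrow> q (k+1) > q k ^ 4 + 3 * q k"
    and q_ii: "\<And>k. k \<ge> 1 \<Longrightarrow> \<tau> (nat \<lceil>real (q (k+1)) / 3\<rceil>) < 1 / (16 * real (q k))"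
    and a_bd: "\<And>n. n \<ge> 1 \<Longrightarrow> \<bar>a n\<bar> \<le> 1"
    and N_mono: "strict_mono N"
    and N_lim: "(\<lambda>j. (1 / real (N j)) * (\<Sum>n=1..N j. \<bar>a n\<bar>)) \<longlonglongrightarrow> \<theta>"
    and theta_pos: "\<theta> > 0"
  shows "\<exists>js x. strict_mono js \<and> x \<in> Xhat q \<and>
           (\<forall>\<^sub>F t in sequentially. avg a x (N (js t)) \<ge> \<theta> * \<tau> (N (js t))) \<and>
           limsup (\<lambda>M. ereal (avg a x M / \<tau> M)) > 0"
proof -
  interpret setting q \<tau> a N \<theta>
    by unfold_locales (fact q_ge2 q_i tau_noninc q_ii a_bd N_mono N_lim theta_pos)+
  obtain js :: "nat \<Rightarrow> nat" and x where js: "strict_mono js" and x: "x \<in> Xhat q"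
    and above: "\<And>t. \<theta> * \<tau> (N (js t)) < avg a x (N (js t))"
    using exists_good_point by blast
  have "\<theta> \<le> avg a x ((N \<circ> js) t) / \<tau> ((N \<circ> js) t)" for t
    using above[of t] tau_pos[of "N (js t)"] by (simp add: pos_le_divide_eq less_imp_le)
  hence "0 < limsup (\<lambda>M. ereal (avg a x M / \<tau> M))"
    by (rule limsup_pos_along_subseq[where f = "\<lambda>M. avg a x M / \<tau> M",
          OF strict_mono_o[OF N_mono js] theta_pos])
  moreover have "\<forall>\<^sub>F t in sequentially. avg a x (N (js t)) \<ge> \<theta> * \<tau> (N (js t))"
    using above by (intro always_eventually allI less_imp_le)
  ultimately show ?thesis using js x by blast
qed

end
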